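(* Let $P=P_1\cdots P_p$ and $T=T_1\cdots T_t$ be strings over a finite alphabet $\Sigma$, and let $R_U^j,R_M^j$ be the vectors computed by the GSM recurrence described in the context. For every $j\in\{1,\dots,t\}$ we have $(R_U^j)_p=1$ or $(R_M^j)_p=1$ if and only if $j\ge p$ and $P$ swap matches $T$ at location $j-p+1$. Equivalently, the GSM algorithm, which at step $j$ reports a match at position $j-p+1$ exactly when $(R_U^j)_p=1$ or $(R_M^j)_p=1$, reports precisely all locations at which $P$ swap matches $T$.
   Context: Strings: for a string $S$, $S_i$ is its $i$-th symbol and $S_{[i,j]}=S_iS_{i+1}\cdots S_j$. A swap permutation for a string $S$ of length $n$ is a permutation $\pi$ of $\{1,\dots,n\}$ such that (i) if $\pi(i)=j$ then $\pi(j)=i$; (ii) $\pi(i)\in\{i-1,i,i+1\}$ for all $i$; (iii) if $\pi(i)\neq i$ then $S_{\pi(i)}\neq S_i$. The swapped version is $\pi(S)=S_{\pi(1)}S_{\pi(2)}\cdots S_{\pi(n)}$. The pattern $P$ swap matches the text $T$ at location $i$ if there is a swap permutation $\pi$ for $P$ with $\pi(P)=T_{[i,i+p-1]}$. Bit vectors: all vectors below are elements of $\{0,1\}^p$ with entries indexed $1,\dots,p$; $\mid$ and $\&$ are bitwise OR and AND. $\mathit{LShift}(x)_1=0$ and $\mathit{LShift}(x)_i=x_{i-1}$ for $2\le i\le p$; $\mathit{RShift}(x)_i=x_{i+1}$ for $1\le i\le p-1$ and $\mathit{RShift}(x)_p=0$; $\mathit{LSO}(x)=\mathit{LShift}(x)\mid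 e_1$, where $e_1$ has a $1$ in entry $1$ and $0$ elsewhere. Masks: for $x\in\Sigma$, $D^x_i=1$ iff $P_i=x$. GSM recurrence: $R_U^0=R_M^0=R_D^0=0^p$, and for $j=1,\dots,t$: $R_U'^{\,j}=\mathit{LSO}(R_D^{j-1})$, $R_M'^{\,j}=R_D'^{\,j}=\mathit{LSO}(R_M^{j-1}\mid R_U^{j-1})$, $R_U^{j}=R_U'^{\,j}\ \&\ \mathit{LShift}(D^{T_j})$, $R_M^{j}=R_M'^{\,j}\ \&\ D^{T_j}$, $R_D^{j}=R_D'^{\,j}\ \&\ \mathit{RShift}(D^{T_j})$. *)

theory Defs
  imports Main
begin

(* Strings are represented 1-indexed: a string S of length n is a function
   S :: nat => 'a, where only S 1, ..., S n are relevant. *)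

definition swap_perm :: "(nat \<Rightarrow> 'a) \<Rightarrow> nat \<Rightarrow> (nat \<Rightarrow> nat) \<Rightarrow> bool" where
  "swap_perm S n \<pi> \<longleftrightarrow>
     bij_betw \<pi> {1..n} {1..n} \<and>
     (\<forall>i\<in>{1..n}. \<forall>j\<in>{1..n}. \<pi> i = j \<longrightarrow> \<pi> j = i) \<and>
     (\<forall>i\<in>{1..n}. \<pi> i = i - 1 \<or> \<pi> i = i \<or> \<pi> i = i + 1) \<and>
     (\<forall>i\<in>{1..n}. \<pi> i \<noteq> i \<longrightarrow> S (\<pi> i) \<noteq> S i)"

definition swap_match :: "(nat \<Rightarrow> 'a) \<Rightarrow> nat \<Rightarrow> (nat \<Rightarrow> 'a) \<Rightarrow> nat \<Rightarrow> bool" where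
  "swap_match P p T i \<longleftrightarrow>
     (\<exists>\<pi>. swap_perm P p \<pi> \<and> (\<forall>k\<in>{1..p}. P (\<pi> k) = T (i + k - 1)))"

(* Bit vectors in {0,1}^p, entries indexed 1..p; represented as nat => bool,
   normalized to False outside {1..p}. *)
type_synonym bv = "nat \<Rightarrow> bool"

definition bor :: "bv \<Rightarrow> bv \<Rightarrow> bv" where "bor x y = (\<lambda>i. x i \<or> y i)"
definition band :: "bv \<Rightarrow> bv \<Rightarrow> bv" where "band x y = (\<lambda>i. x i \<and> y i)"

definition LShift :: "nat \<Rightarrow> bv \<Rightarrow> bv" where
  "LShift p x = (\<lambda>i. 2 \<le> i \<and> i \<le> p \<and> x (i - 1))"
definition RShift :: "nat \<Rightarrow> bv \<Rightarrow> bv" where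
  "RShift p x = (\<lambda>i. 1 \<le> i \<and> i \<le> p - 1 \<and> x (i + 1))"
definition e1 :: "nat \<Rightarrow> bv" where "e1 p = (\<lambda>i. i = 1 \<and> 1 \<le> p)"
definition LSO :: "nat \<Rightarrow> bv \<Rightarrow> bv" where "LSO p x = bor (LShift p x) (e1 p)"

definition mask :: "(nat \<Rightarrow> 'a) \<Rightarrow> nat \<Rightarrow> 'a \<Rightarrow> bv" where
  "mask P p c = (\<lambda>i. 1 \<le> i \<and> i \<le> p \<and> P i = c)"

fun gsm :: "(nat \<Rightarrow> 'a) \<Rightarrow> nat \<Rightarrow> (nat \<Rightarrow> 'a) \<Rightarrow> nat \<Rightarrow> bv \<times> bv \<times> bv" where
  "gsm P p T 0 = (\<lambda>_. False, \<lambda>_. False, \<lambda>_. False)"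
| "gsm P p T (Suc j) =
     (let (RU, RM, RD) = gsm P p T j;
          D = mask P p (T (Suc j));
          RU' = LSO p RD;
          RM' = LSO p (bor RM RU);
          RD' = LSO p (bor RM RU)
      in (band RU' (LShift p D), band RM' D, band RD' (RShift p D)))"

definition RU :: "(nat \<Rightarrow> 'a) \<Rightarrow> nat \<Rightarrow> (nat \<Rightarrow> 'a) \<Rightarrow> nat \<Rightarrow> bv" where
  "RU P p T j = fst (gsm P p T j)"
definition RM :: "(nat \<Rightarrow> 'a) \<Rightarrow> nat \<Rightarrow> (nat \<Rightarrow> 'a) \<Rightarrow> nat \<Rightarrow> bv" where
  "RM P p T j = fst (snd (gsm P p T j))"
definition RD :: "(nat \<Rightarrow> 'a) \<Rightarrow> nat \<Rightarrow> (nat \<Rightarrow> 'a) \<Rightarrow> nat \<Rightarrow> bv" where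
  "RD P p T j = snd (snd (gsm P p T j))"

end

theory Submission
  imports Defs
begin

text \<open>
  A swap permutation of \<open>P[1..k+1]\<close> either fixes \<open>k+1\<close> or exchanges \<open>k\<close> and \<open>k+1\<close>, and its
  restriction to the remaining prefix is again a swap permutation. So \<open>P[1..k+1]\<close> swap matches
  at location \<open>s\<close> iff either \<open>P[1..k]\<close> matches there and \<open>P[k+1]\<close> is matched in place, or
  \<open>P[1..k-1]\<close> matches and the last two symbols are matched crosswise. The GSM vectors follow
  this recurrence along diagonals of constant start location \<open>s = j - i + 1\<close>: bit \<open>i\<close> of
  \<open>R_M^j\<close> (resp. \<open>R_U^j\<close>, \<open>R_D^j\<close>) says that \<open>P[1..i-1]\<close> (resp. \<open>P[1..i-2]\<close>, \<open>P[1..i-1]\<close>) matches at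
  \<open>s\<close>, followed by \<open>P[i]\<close> in place (resp. a crossed pair \<open>P[i-1] P[i]\<close>, the first half \<open>P[i+1]\<close>
  of a crossed pair). Bit \<open>p\<close> of \<open>R_U^j | R_M^j\<close> thus says that all of \<open>P\<close> matches ending at \<open>T[j]\<close>.
\<close>

lemma swap_perm_iff:
  "swap_perm S n \<pi> \<longleftrightarrow>
     (\<forall>i\<in>{1..n}. \<pi> i \<in> {1..n} \<and> \<pi> (\<pi> i) = i \<and> (\<pi> i = i - 1 \<or> \<pi> i = i \<or> \<pi> i = i + 1) \<and>
        (\<pi> i \<noteq> i \<longrightarrow> S (\<pi> i) \<noteq> S i))"
  (is "_ \<longleftrightarrow> ?pointwise")
proof
  assume "swap_perm S n \<pi>"
  then show ?pointwise
    unfolding swap_perm_def by (metis bij_betwE)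
next
  assume pw: ?pointwise
  then have "bij_betw \<pi> {1..n} {1..n}"
    by (intro bij_betw_byWitness[where f' = \<pi>]) auto
  with pw show "swap_perm S n \<pi>"
    unfolding swap_perm_def by metis
qed

lemma swap_perm_extend:
  assumes \<pi>: "swap_perm S k \<pi>" and "k \<le> n"
    and \<sigma>_low: "\<And>i. i \<in> {1..k} \<Longrightarrow> \<sigma> i = \<pi> i"
    and \<sigma>_high: "\<And>i. i \<in> {Suc k..n} \<Longrightarrow> \<sigma> i \<in> {Suc k..n} \<and> \<sigma> (\<sigma> i) = i \<and>
        (\<sigma> i = i - 1 \<or> \<sigma> i = i \<or> \<sigma> i = i + 1) \<and> (\<sigma> i \<noteq> i \<longrightarrow> S (\<sigma> i) \<noteq> S i)"
  shows "swap_perm S n \<sigma>"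
  unfolding swap_perm_iff
proof
  fix i assume i: "i \<in> {1..n}"
  show "\<sigma> i \<in> {1..n} \<and> \<sigma> (\<sigma> i) = i \<and> (\<sigma> i = i - 1 \<or> \<sigma> i = i \<or> \<sigma> i = i + 1) \<and>
        (\<sigma> i \<noteq> i \<longrightarrow> S (\<sigma> i) \<noteq> S i)"
  proof (cases "i \<le> k")
    case True
    with i \<pi> have "\<pi> i \<in> {1..k}" "\<pi> (\<pi> i) = i" "\<pi> i = i - 1 \<or> \<pi> i = i \<or> \<pi> i = i + 1"
      "\<pi> i \<noteq> i \<longrightarrow> S (\<pi> i) \<noteq> S i"
      unfolding swap_perm_iff by auto
    with True i \<sigma>_low \<open>k \<le> n\<close> show ?thesis by auto
  next
    case False
    with i \<sigma>_high[of i] show ?thesis by auto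
  qed
qed

lemma swap_perm_extend_fixed:
  "swap_perm S k \<pi> \<Longrightarrow> swap_perm S (Suc k) (\<pi>(Suc k := Suc k))"
  by (rule swap_perm_extend[of S k \<pi>]) auto

lemma swap_perm_extend_transposition:
  "swap_perm S k \<pi> \<Longrightarrow> S (Suc k) \<noteq> S (Suc (Suc k)) \<Longrightarrow>
     swap_perm S (Suc (Suc k)) (\<pi>(Suc k := Suc (Suc k), Suc (Suc k) := Suc k))"
  by (rule swap_perm_extend[of S k \<pi>]) (auto simp: le_Suc_eq)

lemma swap_perm_restrict:
  "swap_perm S n \<pi> \<Longrightarrow> m \<le> n \<Longrightarrow> \<pi> ` {1..m} \<subseteq> {1..m} \<Longrightarrow> swap_perm S m \<pi>"
  unfolding swap_perm_iff by auto

lemma swap_perm_Suc_cases: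
  assumes "swap_perm S (Suc k) \<pi>"
  obtains "\<pi> (Suc k) = Suc k" "swap_perm S k \<pi>"
  | "1 \<le> k" "\<pi> (Suc k) = k" "\<pi> k = Suc k" "S k \<noteq> S (Suc k)" "swap_perm S (k - 1) \<pi>"
proof -
  have pw: "\<pi> i \<in> {1..Suc k} \<and> \<pi> (\<pi> i) = i \<and> (\<pi> i = i - 1 \<or> \<pi> i = i \<or> \<pi> i = i + 1) \<and>
        (\<pi> i \<noteq> i \<longrightarrow> S (\<pi> i) \<noteq> S i)" if "i \<in> {1..Suc k}" for i
    using assms that unfolding swap_perm_iff by blast
  from pw[of "Suc k"] consider "\<pi> (Suc k) = Suc k" | "\<pi> (Suc k) = k" "1 \<le> k" by fastforce
  then show thesis
  proof cases
    case 1
    have "\<pi> ` {1..k} \<subseteq> {1..k}"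
      using pw 1 by (fastforce simp: le_Suc_eq)
    with 1 show thesis by (intro that(1) swap_perm_restrict[OF assms]) auto
  next
    case 2
    have "\<pi> k = Suc k"
      using pw[of "Suc k"] 2 by auto
    have "\<pi> i \<in> {1..k - 1}" if i: "i \<in> {1..k - 1}" for i
    proof -
      from i pw[of i] have "\<pi> i \<in> {1..k}" "\<pi> (\<pi> i) = i" by fastforce+
      with i \<open>\<pi> k = Suc k\<close> show ?thesis by (cases "\<pi> i = k") auto
    qed
    then have "\<pi> ` {1..k - 1} \<subseteq> {1..k - 1}" by blast
    with 2 pw[of "Suc k"] show thesis by (intro that(2) swap_perm_restrict[OF assms]) auto
  qed
qed

lemma swap_match_0 [simp]: "swap_match P 0 T i"
  unfolding swap_match_def swap_perm_iff by auto

lemma swap_match_extend_fixed: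
  assumes "swap_match P k T i" and "P (Suc k) = T (i + k)"
  shows "swap_match P (Suc k) T i"
proof -
  obtain \<pi> where \<pi>: "swap_perm P k \<pi>" and match: "\<forall>m\<in>{1..k}. P (\<pi> m) = T (i + m - 1)"
    using assms(1) unfolding swap_match_def by blast
  have "\<forall>m\<in>{1..Suc k}. P ((\<pi>(Suc k := Suc k)) m) = T (i + m - 1)"
    using match assms(2) by (auto simp: le_Suc_eq)
  with swap_perm_extend_fixed[OF \<pi>] show ?thesis
    unfolding swap_match_def by blast
qed

lemma swap_match_extend_swapped:
  assumes "swap_match P k T i" and "P (Suc k) = T (i + Suc k)" and "P (Suc (Suc k)) = T (i + k)"
  shows "swap_match P (Suc (Suc k)) T i"
proof (cases "P (Suc k) = P (Suc (Suc k))")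
  case True
  with assms show ?thesis
    by (intro swap_match_extend_fixed) auto
next
  case False
  obtain \<pi> where \<pi>: "swap_perm P k \<pi>" and match: "\<forall>m\<in>{1..k}. P (\<pi> m) = T (i + m - 1)"
    using assms(1) unfolding swap_match_def by blast
  let ?\<sigma> = "\<pi>(Suc k := Suc (Suc k), Suc (Suc k) := Suc k)"
  have "\<forall>m\<in>{1..Suc (Suc k)}. P (?\<sigma> m) = T (i + m - 1)"
    using match assms(2,3) by (auto simp: le_Suc_eq)
  with swap_perm_extend_transposition[OF \<pi> False] show ?thesis
    unfolding swap_match_def by blast
qed

lemma swap_match_SucE:
  assumes "swap_match P (Suc k) T i"
  obtains "swap_match P k T i" "P (Suc k) = T (i + k)"
  | "1 \<le> k" "swap_match P (k - 1) T i" "P k = T (i + k)" "P (Suc k) = T (i + k - 1)"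
proof -
  obtain \<pi> where \<pi>: "swap_perm P (Suc k) \<pi>" and match: "\<forall>m\<in>{1..Suc k}. P (\<pi> m) = T (i + m - 1)"
    using assms unfolding swap_match_def by blast
  from \<pi> show thesis
  proof (cases rule: swap_perm_Suc_cases)
    case 1
    with match match[rule_format, of "Suc k"] show thesis
      by (intro that(1)) (auto simp: swap_match_def)
  next
    case 2
    with match match[rule_format, of "Suc k"] match[rule_format, of k] show thesis
      by (intro that(2)) (auto simp: swap_match_def intro!: exI[of _ \<pi>])
  qed
qed

lemma swap_match_Suc:
  "swap_match P (Suc k) T i \<longleftrightarrow>
     (swap_match P k T i \<and> P (Suc k) = T (i + k)) \<or>
     (1 \<le> k \<and> swap_match P (k - 1) T i \<and> P k = T (i + k) \<and> P (Suc k) = T (i + k - 1))"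
  by (cases k) (auto elim: swap_match_SucE intro: swap_match_extend_fixed swap_match_extend_swapped)

lemma swap_match_ending_at:
  assumes "1 \<le> i" and "i \<le> j"
  shows "swap_match P i T (j - i + 1) \<longleftrightarrow>
    (swap_match P (i - 1) T (j - i + 1) \<and> P i = T j) \<or>
    (2 \<le> i \<and> swap_match P (i - 2) T (j - i + 1) \<and> P (i - 1) = T j \<and> P i = T (j - 1))"
proof -
  obtain k where "i = Suc k" using assms(1) by (cases i) auto
  with swap_match_Suc[of P k T "j - i + 1"] assms(2) show ?thesis
    by (auto simp: numeral_2_eq_2)
qed

lemma gsm_0: "RU P p T 0 = (\<lambda>_. False)" "RM P p T 0 = (\<lambda>_. False)" "RD P p T 0 = (\<lambda>_. False)"
  by (simp_all add: RU_def RM_def RD_def)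

lemma gsm_Suc:
  "RU P p T (Suc j) = band (LSO p (RD P p T j)) (LShift p (mask P p (T (Suc j))))"
  "RM P p T (Suc j) = band (LSO p (bor (RM P p T j) (RU P p T j))) (mask P p (T (Suc j)))"
  "RD P p T (Suc j) = band (LSO p (bor (RM P p T j) (RU P p T j))) (RShift p (mask P p (T (Suc j))))"
  by (simp_all add: RU_def RM_def RD_def case_prod_unfold Let_def)

lemma gsm_invariant:
  "(\<forall>i. RM P p T j i \<longleftrightarrow> 1 \<le> i \<and> i \<le> p \<and> i \<le> j \<and>
          swap_match P (i - 1) T (j - i + 1) \<and> P i = T j) \<and>
   (\<forall>i. RU P p T j i \<longleftrightarrow> 2 \<le> i \<and> i \<le> p \<and> i \<le> j \<and>
          swap_match P (i - 2) T (j - i + 1) \<and> P (i - 1) = T j \<and> P i = T (j - 1)) \<and>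
   (\<forall>i. RD P p T j i \<longleftrightarrow> 1 \<le> i \<and> i < p \<and> i \<le> j \<and>
          swap_match P (i - 1) T (j - i + 1) \<and> P (Suc i) = T j)"
proof (induction j)
  case 0
  show ?case by (simp add: gsm_0)
next
  case (Suc j)
  then have RM: "RM P p T j i \<longleftrightarrow> 1 \<le> i \<and> i \<le> p \<and> i \<le> j \<and>
          swap_match P (i - 1) T (j - i + 1) \<and> P i = T j"
    and RU: "RU P p T j i \<longleftrightarrow> 2 \<le> i \<and> i \<le> p \<and> i \<le> j \<and>
          swap_match P (i - 2) T (j - i + 1) \<and> P (i - 1) = T j \<and> P i = T (j - 1)"
    and RD: "RD P p T j i \<longleftrightarrow> 1 \<le> i \<and> i < p \<and> i \<le> j \<and>
          swap_match P (i - 1) T (j - i + 1) \<and> P (Suc i) = T j" for i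
    by blast+
  have match: "RM P p T j i \<or> RU P p T j i \<longleftrightarrow>
      1 \<le> i \<and> i \<le> p \<and> i \<le> j \<and> swap_match P i T (j - i + 1)" for i
    using swap_match_ending_at[of i j P T] by (auto simp: RM RU)
  have "RM P p T (Suc j) i \<longleftrightarrow> 1 \<le> i \<and> i \<le> p \<and> i \<le> Suc j \<and>
          swap_match P (i - 1) T (Suc j - i + 1) \<and> P i = T (Suc j)" for i
    by (cases i) (auto simp: gsm_Suc band_def bor_def LSO_def LShift_def e1_def mask_def match)
  moreover have "RU P p T (Suc j) i \<longleftrightarrow> 2 \<le> i \<and> i \<le> p \<and> i \<le> Suc j \<and>
          swap_match P (i - 2) T (Suc j - i + 1) \<and> P (i - 1) = T (Suc j) \<and> P i = T (Suc j - 1)" for i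
    by (cases i) (auto simp: gsm_Suc band_def bor_def LSO_def LShift_def e1_def mask_def RD)
  moreover have "RD P p T (Suc j) i \<longleftrightarrow> 1 \<le> i \<and> i < p \<and> i \<le> Suc j \<and>
          swap_match P (i - 1) T (Suc j - i + 1) \<and> P (Suc i) = T (Suc j)" for i
    by (cases i) (auto simp: gsm_Suc band_def bor_def LSO_def LShift_def RShift_def e1_def mask_def match)
  ultimately show ?case by blast
qed

lemma gsm_match_bit:
  "RU P p T j i \<or> RM P p T j i \<longleftrightarrow> 1 \<le> i \<and> i \<le> p \<and> i \<le> j \<and> swap_match P i T (j - i + 1)"
  using gsm_invariant[of P p T j] swap_match_ending_at[of i j P T] by auto

theorem mainTheorem3:
  fixes P T :: "nat \<Rightarrow> 'a::finite" and p t :: nat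
  assumes "p \<ge> 1"
  shows "\<forall>j\<in>{1..t}. (RU P p T j p \<or> RM P p T j p) \<longleftrightarrow>
            (j \<ge> p \<and> swap_match P p T (j - p + 1))"
  using gsm_match_bit[of P p T _ p] assms by simp

end
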